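(* Let $\pi$ be a skew-merged permutation with no central elements and $\tau$ a skew-merged permutation. If $e_1$ and $e_2$ are embeddings of $\pi$ into $\tau$, then the map $e_1\wedge e_2$ defined by $(e_1\wedge e_2)(x)=\mathit{outer}\{e_1(x),e_2(x)\}$ for all points $x$ of $\pi$ is also an embedding of $\pi$ into $\tau$.
   Context: Permutations are identified with their sets of points $(i,\sigma(i))$; an embedding is an injective map between point sets preserving relative horizontal and vertical order of every pair. A permutation is skew-merged if its points can be partitioned into an increasing and a decreasing subsequence. An element is of type NE if it plays the $3$ in an occurrence of $213$, NW if it plays the $3$ in an occurrence of $312$, SW if it plays the $1$ in an occurrence of $132$, SE if it plays the $1$ in an occurrence of $231$, and central otherwise; the four non-central types are pairwise disjoint, SW and NE elements form increasing sequences, NW and SE elements form decreasing sequences, and embeddings between skew-merged permutations preserve the type of non-central elements. For two non-central elements $x,y$ of the same type, $x\lhd y$ means $x$ lies strictly further out from the centre than $y$: for type SW, $x$ is left of and below $y$; for NE, $x$ is right of and above $y$; for NW, $x$ is left of and above $y$; for SE, $x$ is right of and below $y$. $\mathit{outer}$ of two elements of the same type is the $\lhd$-minimum (the one further out), or the common element if equal. *)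

theory Defs
  imports Main
begin

text \<open>A permutation of length n (a bijection of {1..n}) is identified with its point set.\<close>
definition perm_points :: "nat \<Rightarrow> (nat \<Rightarrow> nat) \<Rightarrow> (nat \<times> nat) set" where
  "perm_points n \<sigma> = {(i, \<sigma> i) | i. i \<in> {1..n}}"

definition is_perm :: "nat \<Rightarrow> (nat \<Rightarrow> nat) \<Rightarrow> bool" where
  "is_perm n \<sigma> \<longleftrightarrow> bij_betw \<sigma> {1..n} {1..n}"

definition embedding ::
  "(nat \<times> nat) set \<Rightarrow> (nat \<times> nat) set \<Rightarrow> ((nat \<times> nat) \<Rightarrow> (nat \<times> nat)) \<Rightarrow> bool" where
  "embedding P Q e \<longleftrightarrow> inj_on e P \<and> e ` P \<subseteq> Q \<and>
     (\<forall>p\<in>P. \<forall>q\<in>P. (fst p < fst q \<longleftrightarrow> fst (e p) < fst (e q)) \<and>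
                     (snd p < snd q \<longleftrightarrow> snd (e p) < snd (e q)))"

definition increasing_pts :: "(nat \<times> nat) set \<Rightarrow> bool" where
  "increasing_pts A \<longleftrightarrow> (\<forall>p\<in>A. \<forall>q\<in>A. fst p < fst q \<longrightarrow> snd p < snd q)"

definition decreasing_pts :: "(nat \<times> nat) set \<Rightarrow> bool" where
  "decreasing_pts A \<longleftrightarrow> (\<forall>p\<in>A. \<forall>q\<in>A. fst p < fst q \<longrightarrow> snd p > snd q)"

definition skew_merged :: "(nat \<times> nat) set \<Rightarrow> bool" where
  "skew_merged P \<longleftrightarrow> (\<exists>A B. A \<union> B = P \<and> A \<inter> B = {} \<and> increasing_pts A \<and> decreasing_pts B)"

datatype ptype = NE | NW | SW | SE

fun has_type :: "(nat \<times> nat) set \<Rightarrow> ptype \<Rightarrow> (nat \<times> nat) \<Rightarrow> bool" where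
  \<comment> \<open>x plays the 3 in 213\<close>
  "has_type P NE x \<longleftrightarrow> x \<in> P \<and> (\<exists>a\<in>P. \<exists>b\<in>P.
      fst a < fst b \<and> fst b < fst x \<and> snd b < snd a \<and> snd a < snd x)"
  \<comment> \<open>x plays the 3 in 312\<close>
| "has_type P NW x \<longleftrightarrow> x \<in> P \<and> (\<exists>a\<in>P. \<exists>b\<in>P.
      fst x < fst a \<and> fst a < fst b \<and> snd a < snd b \<and> snd b < snd x)"
  \<comment> \<open>x plays the 1 in 132\<close>
| "has_type P SW x \<longleftrightarrow> x \<in> P \<and> (\<exists>a\<in>P. \<exists>b\<in>P.
      fst x < fst a \<and> fst a < fst b \<and> snd x < snd b \<and> snd b < snd a)"
  \<comment> \<open>x plays the 1 in 231\<close>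
| "has_type P SE x \<longleftrightarrow> x \<in> P \<and> (\<exists>a\<in>P. \<exists>b\<in>P.
      fst a < fst b \<and> fst b < fst x \<and> snd x < snd a \<and> snd a < snd b)"

definition central :: "(nat \<times> nat) set \<Rightarrow> (nat \<times> nat) \<Rightarrow> bool" where
  "central P x \<longleftrightarrow> x \<in> P \<and> (\<forall>T. \<not> has_type P T x)"

text \<open>x \<lhd> y: x lies strictly further out from the centre than y.\<close>
fun further_out :: "ptype \<Rightarrow> (nat \<times> nat) \<Rightarrow> (nat \<times> nat) \<Rightarrow> bool" where
  "further_out SW x y \<longleftrightarrow> fst x < fst y \<and> snd x < snd y"
| "further_out NE x y \<longleftrightarrow> fst x > fst y \<and> snd x > snd y"
| "further_out NW x y \<longleftrightarrow> fst x < fst y \<and> snd x > snd y"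
| "further_out SE x y \<longleftrightarrow> fst x > fst y \<and> snd x < snd y"

text \<open>outer of two elements of Q of the same type: the \<lhd>-minimum, or the common element.\<close>
definition outer :: "(nat \<times> nat) set \<Rightarrow> (nat \<times> nat) \<Rightarrow> (nat \<times> nat) \<Rightarrow> (nat \<times> nat)" where
  "outer Q u v = (if \<exists>T. has_type Q T u \<and> has_type Q T v \<and> further_out T v u then v else u)"

definition meet_emb ::
  "(nat \<times> nat) set \<Rightarrow> ((nat \<times> nat) \<Rightarrow> (nat \<times> nat)) \<Rightarrow> ((nat \<times> nat) \<Rightarrow> (nat \<times> nat))
     \<Rightarrow> (nat \<times> nat) \<Rightarrow> (nat \<times> nat)" where
  "meet_emb Q e1 e2 = (\<lambda>x. outer Q (e1 x) (e2 x))"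

end

theory Submission
  imports Defs
begin

text \<open>
  Fix a partition of a skew-merged permutation into an increasing part \<open>A\<close> and a decreasing
  part \<open>B\<close>. Elements of types SW and NE lie in \<open>A\<close>, those of types NW and SE in \<open>B\<close>, each
  with a witness from the other part; comparing witnesses shows that the type is unique, that
  two elements of the same type are \<open>\<lhd>\<close>-comparable, and that elements of the western types
  SW, NW lie strictly left of elements of the eastern types NE, SE (likewise southern below
  northern). Embeddings preserve types, so \<open>(e\<^sub>1 \<and> e\<^sub>2)(x)\<close> is whichever of \<open>e\<^sub>1(x), e\<^sub>2(x)\<close> is
  further out in the direction of the type of \<open>x\<close>. Now let \<open>p\<close> lie left of \<open>q\<close>. If \<open>p\<close> is
  western, its image moves weakly left of both \<open>e\<^sub>i(p)\<close>, hence stays left of both \<open>e\<^sub>i(q)\<close>;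
  symmetrically if \<open>q\<close> is eastern; and \<open>p\<close> eastern with \<open>q\<close> western is impossible, since every
  element of \<open>\<pi>\<close> has a type. The vertical order is handled in the same way.
\<close>

definition skew_partition :: "(nat \<times> nat) set \<Rightarrow> (nat \<times> nat) set \<Rightarrow> (nat \<times> nat) set \<Rightarrow> bool" where
  "skew_partition Q A B \<longleftrightarrow> A \<union> B = Q \<and> A \<inter> B = {} \<and> increasing_pts A \<and> decreasing_pts B"

lemma skew_merged_iff_partition: "skew_merged Q \<longleftrightarrow> (\<exists>A B. skew_partition Q A B)"
  unfolding skew_merged_def skew_partition_def by blast

definition distinct_coords :: "(nat \<times> nat) set \<Rightarrow> bool" where
  "distinct_coords Q \<longleftrightarrow> (\<forall>p\<in>Q. \<forall>q\<in>Q. p \<noteq> q \<longrightarrow> fst p \<noteq> fst q \<and> snd p \<noteq> snd q)"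

lemma perm_points_distinct_coords:
  assumes "is_perm n \<sigma>"
  shows "distinct_coords (perm_points n \<sigma>)"
proof -
  have "inj_on \<sigma> {1..n}" using assms unfolding is_perm_def bij_betw_def by blast
  then show ?thesis unfolding distinct_coords_def perm_points_def by (auto simp: inj_on_eq_iff)
qed

lemma has_type_in: "has_type Q T x \<Longrightarrow> x \<in> Q"
  by (cases T) auto

definition weakly_further_out :: "ptype \<Rightarrow> nat \<times> nat \<Rightarrow> nat \<times> nat \<Rightarrow> bool" where
  "weakly_further_out T x y \<longleftrightarrow> x = y \<or> further_out T x y"

context
  fixes Q A B
  assumes partition: "skew_partition Q A B"
begin

lemma has_type_SW_partition:
  "has_type Q SW x \<Longrightarrow> x \<in> A \<and> (\<exists>b\<in>B. fst x < fst b \<and> snd x < snd b)"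
  using partition unfolding skew_partition_def increasing_pts_def decreasing_pts_def
  by simp (metis UnE less_trans order.asym)

lemma has_type_NE_partition:
  "has_type Q NE x \<Longrightarrow> x \<in> A \<and> (\<exists>b\<in>B. fst b < fst x \<and> snd b < snd x)"
  using partition unfolding skew_partition_def increasing_pts_def decreasing_pts_def
  by simp (metis UnE less_trans order.asym)

lemma has_type_NW_partition:
  "has_type Q NW x \<Longrightarrow> x \<in> B \<and> (\<exists>a\<in>A. fst x < fst a \<and> snd a < snd x)"
  using partition unfolding skew_partition_def increasing_pts_def decreasing_pts_def
  by simp (metis UnE less_trans order.asym)

lemma has_type_SE_partition:
  "has_type Q SE x \<Longrightarrow> x \<in> B \<and> (\<exists>a\<in>A. fst a < fst x \<and> snd x < snd a)"
  using partition unfolding skew_partition_def increasing_pts_def decreasing_pts_def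
  by simp (metis UnE less_trans order.asym)

lemmas has_type_partition =
  has_type_SW_partition has_type_NE_partition has_type_NW_partition has_type_SE_partition

lemma partition_increasing: "\<lbrakk>p \<in> A; q \<in> A; fst p < fst q\<rbrakk> \<Longrightarrow> snd p < snd q"
  using partition unfolding skew_partition_def increasing_pts_def by blast

lemma partition_decreasing: "\<lbrakk>p \<in> B; q \<in> B; fst p < fst q\<rbrakk> \<Longrightarrow> snd q < snd p"
  using partition unfolding skew_partition_def decreasing_pts_def by blast

lemma partition_disjoint: "x \<in> A \<Longrightarrow> x \<notin> B"
  using partition unfolding skew_partition_def by blast

lemma not_SW_and_NE:
  assumes "has_type Q SW x" "has_type Q NE x"
  shows False
proof -
  obtain b where "b \<in> B" "fst x < fst b" "snd x < snd b"
    using has_type_SW_partition[OF assms(1)] by blast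
  moreover obtain c where "c \<in> B" "fst c < fst x" "snd c < snd x"
    using has_type_NE_partition[OF assms(2)] by blast
  ultimately show False using partition_decreasing[of c b] by simp
qed

lemma not_NW_and_SE:
  assumes "has_type Q NW x" "has_type Q SE x"
  shows False
proof -
  obtain a where "a \<in> A" "fst x < fst a" "snd a < snd x"
    using has_type_NW_partition[OF assms(1)] by blast
  moreover obtain c where "c \<in> A" "fst c < fst x" "snd x < snd c"
    using has_type_SE_partition[OF assms(2)] by blast
  ultimately show False using partition_increasing[of c a] by simp
qed

lemma has_type_unique:
  assumes "has_type Q T x" "has_type Q T' x"
  shows "T = T'"
proof (cases T; cases T')
qed (use assms not_SW_and_NE not_NW_and_SE has_type_partition partition_disjoint in blast)+

lemma west_left_of_east:
  assumes "distinct_coords Q" "has_type Q T x" "has_type Q T' y" "T \<in> {SW, NW}" "T' \<in> {NE, SE}"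
  shows "fst x < fst y"
proof (rule ccontr)
  assume "\<not> fst x < fst y"
  moreover have "x \<noteq> y" using has_type_unique assms(2-5) by blast
  ultimately have yx: "fst y < fst x"
    using assms(1) has_type_in[OF assms(2)] has_type_in[OF assms(3)]
    unfolding distinct_coords_def by fastforce
  consider "T = SW" "T' = NE" | "T = SW" "T' = SE" | "T = NW" "T' = NE" | "T = NW" "T' = SE"
    using assms(4,5) by blast
  then show False
  proof cases
    case 1
    then obtain b c where "x \<in> A" "b \<in> B" "fst x < fst b" "snd x < snd b"
      and "y \<in> A" "c \<in> B" "fst c < fst y" "snd c < snd y"
      using has_type_SW_partition has_type_NE_partition assms(2,3) by blast
    then show False using yx partition_increasing[of y x] partition_decreasing[of c b] by simp
  next
    case 2
    then obtain b a where "x \<in> A" "b \<in> B" "fst x < fst b" "snd x < snd b"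
      and "y \<in> B" "a \<in> A" "fst a < fst y" "snd y < snd a"
      using has_type_SW_partition has_type_SE_partition assms(2,3) by blast
    then show False using yx partition_increasing[of a x] partition_decreasing[of y b] by simp
  next
    case 3
    then obtain a c where "x \<in> B" "a \<in> A" "fst x < fst a" "snd a < snd x"
      and "y \<in> A" "c \<in> B" "fst c < fst y" "snd c < snd y"
      using has_type_NW_partition has_type_NE_partition assms(2,3) by blast
    then show False using yx partition_increasing[of y a] partition_decreasing[of c x] by simp
  next
    case 4
    then obtain a a' where "x \<in> B" "a \<in> A" "fst x < fst a" "snd a < snd x"
      and "y \<in> B" "a' \<in> A" "fst a' < fst y" "snd y < snd a'"
      using has_type_NW_partition has_type_SE_partition assms(2,3) by blast
    then show False using yx partition_increasing[of a' a] partition_decreasing[of y x] by simp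
  qed
qed

lemma south_below_north:
  assumes "distinct_coords Q" "has_type Q T x" "has_type Q T' y" "T \<in> {SW, SE}" "T' \<in> {NE, NW}"
  shows "snd x < snd y"
proof (rule ccontr)
  assume "\<not> snd x < snd y"
  moreover have "x \<noteq> y" using has_type_unique assms(2-5) by blast
  ultimately have yx: "snd y < snd x" and fne: "fst x \<noteq> fst y"
    using assms(1) has_type_in[OF assms(2)] has_type_in[OF assms(3)]
    unfolding distinct_coords_def by fastforce+
  consider "T = SW" "T' = NE" | "T = SW" "T' = NW" | "T = SE" "T' = NE" | "T = SE" "T' = NW"
    using assms(4,5) by blast
  then show False
  proof cases
    case 1
    then obtain b c where "x \<in> A" "b \<in> B" "fst x < fst b" "snd x < snd b"
      and "y \<in> A" "c \<in> B" "fst c < fst y" "snd c < snd y"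
      using has_type_SW_partition has_type_NE_partition assms(2,3) by blast
    then show False
      using yx fne partition_increasing[of x y] partition_decreasing[of c b] by linarith
  next
    case 2
    then obtain b a where "x \<in> A" "b \<in> B" "fst x < fst b" "snd x < snd b"
      and "y \<in> B" "a \<in> A" "fst y < fst a" "snd a < snd y"
      using has_type_SW_partition has_type_NW_partition assms(2,3) by blast
    then show False
      using yx partition_decreasing[of y b] partition_increasing[of x a] by linarith
  next
    case 3
    then obtain a c where "x \<in> B" "a \<in> A" "fst a < fst x" "snd x < snd a"
      and "y \<in> A" "c \<in> B" "fst c < fst y" "snd c < snd y"
      using has_type_SE_partition has_type_NE_partition assms(2,3) by blast
    then show False
      using yx partition_increasing[of a y] partition_decreasing[of c x] by linarith
  next
    case 4
    then obtain a a' where "x \<in> B" "a \<in> A" "fst a < fst x" "snd x < snd a"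
      and "y \<in> B" "a' \<in> A" "fst y < fst a'" "snd a' < snd y"
      using has_type_SE_partition has_type_NW_partition assms(2,3) by blast
    then show False
      using yx fne partition_decreasing[of y x] partition_increasing[of a a'] by linarith
  qed
qed

lemma same_type_further_out:
  assumes "distinct_coords Q" "has_type Q T u" "has_type Q T v" "u \<noteq> v"
  shows "further_out T u v \<or> further_out T v u"
proof -
  have "fst u < fst v \<or> fst v < fst u"
    using assms(1,4) has_type_in[OF assms(2)] has_type_in[OF assms(3)]
    unfolding distinct_coords_def by fastforce
  then show ?thesis
    using assms(2,3) has_type_partition partition_increasing[of u v] partition_increasing[of v u]
      partition_decreasing[of u v] partition_decreasing[of v u]
    by (cases T) auto
qed

lemma outer_weakly_further_out:
  assumes "distinct_coords Q" "has_type Q T u" "has_type Q T v"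
  shows "outer Q u v \<in> {u, v} \<and> weakly_further_out T (outer Q u v) u
    \<and> weakly_further_out T (outer Q u v) v"
proof (cases "\<exists>T'. has_type Q T' u \<and> has_type Q T' v \<and> further_out T' v u")
  case True
  then obtain T' where "has_type Q T' u" "further_out T' v u" by blast
  moreover have "T' = T" using has_type_unique calculation(1) assms(2) .
  ultimately show ?thesis using True unfolding outer_def weakly_further_out_def by auto
next
  case False
  then have "u = v \<or> further_out T u v" using same_type_further_out assms by blast
  then show ?thesis using False unfolding outer_def weakly_further_out_def by auto
qed

end

lemma embedding_mem: "embedding P Q e \<Longrightarrow> x \<in> P \<Longrightarrow> e x \<in> Q"
  unfolding embedding_def by blast

lemma embedding_has_type:
  assumes "embedding P Q e" "has_type P T x"
  shows "has_type Q T (e x)"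
  using assms unfolding embedding_def
  by (cases T) (simp; smt (verit) image_subset_iff)+

lemma weakly_further_out_coords:
  assumes "weakly_further_out T w u"
  shows "T \<in> {SW, NW} \<Longrightarrow> fst w \<le> fst u" "T \<in> {NE, SE} \<Longrightarrow> fst u \<le> fst w"
    "T \<in> {SW, SE} \<Longrightarrow> snd w \<le> snd u" "T \<in> {NE, NW} \<Longrightarrow> snd u \<le> snd w"
  using assms by (auto simp: weakly_further_out_def)

lemma meet_emb_weakly_further_out:
  assumes "skew_partition Q A B" "distinct_coords Q" "embedding P Q e1" "embedding P Q e2"
    "has_type P T x"
  shows "meet_emb Q e1 e2 x \<in> {e1 x, e2 x}" "weakly_further_out T (meet_emb Q e1 e2 x) (e1 x)"
    "weakly_further_out T (meet_emb Q e1 e2 x) (e2 x)"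
  using outer_weakly_further_out[OF assms(1,2) embedding_has_type[OF assms(3,5)]
      embedding_has_type[OF assms(4,5)]]
  unfolding meet_emb_def by auto

lemma meet_emb_fst_less:
  assumes P: "skew_partition P A B" "distinct_coords P"
    and Q: "skew_partition Q C D" "distinct_coords Q"
    and e: "embedding P Q e1" "embedding P Q e2"
    and types: "has_type P T p" "has_type P T' q" and "fst p < fst q"
  shows "fst (meet_emb Q e1 e2 p) < fst (meet_emb Q e1 e2 q)"
proof -
  have e_less: "fst (e1 p) < fst (e1 q)" "fst (e2 p) < fst (e2 q)"
    using e has_type_in[OF types(1)] has_type_in[OF types(2)] \<open>fst p < fst q\<close>
    unfolding embedding_def by blast+
  note meet_p = meet_emb_weakly_further_out[OF Q e types(1)]
    and meet_q = meet_emb_weakly_further_out[OF Q e types(2)]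
  consider "T \<in> {SW, NW}" | "T' \<in> {NE, SE}" | "T \<in> {NE, SE}" "T' \<in> {SW, NW}"
    by (cases T; cases T') auto
  then show ?thesis
  proof cases
    case 1
    then show ?thesis using e_less meet_p meet_q weakly_further_out_coords(1) by fastforce
  next
    case 2
    then show ?thesis using e_less meet_p meet_q weakly_further_out_coords(2) by fastforce
  next
    case 3
    then show ?thesis
      using west_left_of_east[OF P(1,2) types(2,1)] \<open>fst p < fst q\<close> by simp
  qed
qed

lemma meet_emb_snd_less:
  assumes P: "skew_partition P A B" "distinct_coords P"
    and Q: "skew_partition Q C D" "distinct_coords Q"
    and e: "embedding P Q e1" "embedding P Q e2"
    and types: "has_type P T p" "has_type P T' q" and "snd p < snd q"
  shows "snd (meet_emb Q e1 e2 p) < snd (meet_emb Q e1 e2 q)"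
proof -
  have e_less: "snd (e1 p) < snd (e1 q)" "snd (e2 p) < snd (e2 q)"
    using e has_type_in[OF types(1)] has_type_in[OF types(2)] \<open>snd p < snd q\<close>
    unfolding embedding_def by blast+
  note meet_p = meet_emb_weakly_further_out[OF Q e types(1)]
    and meet_q = meet_emb_weakly_further_out[OF Q e types(2)]
  consider "T \<in> {SW, SE}" | "T' \<in> {NE, NW}" | "T \<in> {NE, NW}" "T' \<in> {SW, SE}"
    by (cases T; cases T') auto
  then show ?thesis
  proof cases
    case 1
    then show ?thesis using e_less meet_p meet_q weakly_further_out_coords(3) by fastforce
  next
    case 2
    then show ?thesis using e_less meet_p meet_q weakly_further_out_coords(4) by fastforce
  next
    case 3
    then show ?thesis
      using south_below_north[OF P(1,2) types(2,1)] \<open>snd p < snd q\<close> by simp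
  qed
qed

lemma embedding_if_strict_mono:
  assumes "distinct_coords P" "f ` P \<subseteq> Q"
    and "\<And>p q. \<lbrakk>p \<in> P; q \<in> P; fst p < fst q\<rbrakk> \<Longrightarrow> fst (f p) < fst (f q)"
    and "\<And>p q. \<lbrakk>p \<in> P; q \<in> P; snd p < snd q\<rbrakk> \<Longrightarrow> snd (f p) < snd (f q)"
  shows "embedding P Q f"
  using assms unfolding embedding_def distinct_coords_def inj_on_def
  by (metis less_asym linorder_neqE_nat)

theorem lemma3:
  fixes n m :: nat and \<pi> \<tau> :: "nat \<Rightarrow> nat"
    and e1 e2 :: "nat \<times> nat \<Rightarrow> nat \<times> nat"
  assumes "is_perm n \<pi>" and "is_perm m \<tau>"
    and "skew_merged (perm_points n \<pi>)" and "skew_merged (perm_points m \<tau>)"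
    and "\<forall>x\<in>perm_points n \<pi>. \<not> central (perm_points n \<pi>) x"
    and "embedding (perm_points n \<pi>) (perm_points m \<tau>) e1"
    and "embedding (perm_points n \<pi>) (perm_points m \<tau>) e2"
  shows "embedding (perm_points n \<pi>) (perm_points m \<tau>) (meet_emb (perm_points m \<tau>) e1 e2)"
proof -
  define P Q where "P = perm_points n \<pi>" and "Q = perm_points m \<tau>"
  note assms = assms[folded P_def Q_def]
  have P: "distinct_coords P" and Q: "distinct_coords Q"
    using perm_points_distinct_coords assms(1,2) unfolding P_def Q_def by blast+
  obtain A B C D where partP: "skew_partition P A B" and partQ: "skew_partition Q C D"
    using assms(3,4) skew_merged_iff_partition by blast
  note meet_fst_less = meet_emb_fst_less[OF partP P partQ Q assms(6,7)]
    and meet_snd_less = meet_emb_snd_less[OF partP P partQ Q assms(6,7)]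
    and meet_weakly_further_out = meet_emb_weakly_further_out[OF partQ Q assms(6,7)]
  have typed: "\<exists>T. has_type P T x" if "x \<in> P" for x
    using assms(5) that unfolding central_def by blast
  have "embedding P Q (meet_emb Q e1 e2)"
  proof (rule embedding_if_strict_mono[OF P])
    show "meet_emb Q e1 e2 ` P \<subseteq> Q"
    proof (rule image_subsetI)
      fix x assume "x \<in> P"
      moreover obtain T where "has_type P T x" using typed \<open>x \<in> P\<close> by blast
      ultimately show "meet_emb Q e1 e2 x \<in> Q"
        using meet_weakly_further_out(1) embedding_mem[OF assms(6)] embedding_mem[OF assms(7)]
        by fastforce
    qed
  next
    fix p q assume "p \<in> P" "q \<in> P"
    then obtain T T' where "has_type P T p" "has_type P T' q" using typed by blast
    then show "fst p < fst q \<Longrightarrow> fst (meet_emb Q e1 e2 p) < fst (meet_emb Q e1 e2 q)"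
      and "snd p < snd q \<Longrightarrow> snd (meet_emb Q e1 e2 p) < snd (meet_emb Q e1 e2 q)"
      by (simp_all add: meet_fst_less meet_snd_less)
  qed
  then show ?thesis unfolding P_def Q_def .
qed

end
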